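(* Let $V$ be an $\mathcal{L}[\frac12]$-module on which $c$ acts as $0$, with a basis $\{x_k\mid k\in\frac12\mathbb{Z}\}$ and constants $a,b\in\mathbb{C}$, $f_{p,k},g_{n,k}\in\mathbb{C}$ such that for all $p\in\frac12+\mathbb{Z}$, $n\in\mathbb{Z}$, $k\in\frac12\mathbb{Z}$: $Y_px_k=f_{p,k}x_{k+p}$, $M_nx_k=g_{n,k}x_{k+n}$, $L_nx_k=(a+k+bn)x_{k+n}$ if $k\in\mathbb{Z}$ and $L_nx_k=(a+k+(b+\frac12)n)x_{k+n}$ if $k\in\frac12+\mathbb{Z}$. Then there exists $d_0\in\mathbb{C}$ such that $f_{p,k}=d_0$ for all $p,k\in\frac12+\mathbb{Z}$.
   Context: $\mathcal{L}[\frac12]$ is the complex Lie algebra with basis $\{L_m,Y_p,M_n,c\mid m,n\in\mathbb{Z},\ p\in\frac12+\mathbb{Z}\}$ and brackets $[L_m,L_{m'}]=(m'-m)L_{m+m'}+\delta_{m,-m'}\frac{m^3-m}{12}c$, $[L_m,Y_p]=(p-\frac m2)Y_{p+m}$, $[L_m,M_n]=nM_{n+m}$, $[Y_p,Y_{p'}]=(p'-p)M_{p+p'}$, $[Y_p,M_n]=[M_n,M_{n'}]=0$, $c$ central. *)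

theory Defs
  imports Main Complex_Main
begin

text \<open>Indices of the Lie algebra and of the basis are encoded as real numbers.
  hZ k: k belongs to (1/2)Z ; hO p: p belongs to 1/2 + Z.\<close>

definition hZ :: "real \<Rightarrow> bool" where "hZ k \<longleftrightarrow> 2 * k \<in> \<int>"
definition hO :: "real \<Rightarrow> bool" where "hO p \<longleftrightarrow> p - 1/2 \<in> \<int>"

definition Lhalf_module ::
  "(complex \<Rightarrow> 'v::ab_group_add \<Rightarrow> 'v) \<Rightarrow> (real \<Rightarrow> 'v \<Rightarrow> 'v) \<Rightarrow> (real \<Rightarrow> 'v \<Rightarrow> 'v)
   \<Rightarrow> (real \<Rightarrow> 'v \<Rightarrow> 'v) \<Rightarrow> ('v \<Rightarrow> 'v) \<Rightarrow> bool" where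
  "Lhalf_module sm L Y M C \<longleftrightarrow>
     module sm \<and>
     (\<forall>m\<in>\<int>. module_hom sm sm (L m)) \<and>
     (\<forall>p. hO p \<longrightarrow> module_hom sm sm (Y p)) \<and>
     (\<forall>n\<in>\<int>. module_hom sm sm (M n)) \<and>
     module_hom sm sm C \<and>
     (\<forall>m\<in>\<int>. \<forall>m'\<in>\<int>. \<forall>v.
        L m (L m' v) - L m' (L m v) =
        sm (complex_of_real (m' - m)) (L (m + m') v)
        + (if m = - m' then sm (complex_of_real ((m^3 - m) / 12)) (C v) else 0)) \<and>
     (\<forall>m\<in>\<int>. \<forall>p. hO p \<longrightarrow> (\<forall>v.
        L m (Y p v) - Y p (L m v) = sm (complex_of_real (p - m / 2)) (Y (p + m) v))) \<and>
     (\<forall>m\<in>\<int>. \<forall>n\<in>\<int>. \<forall>v.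
        L m (M n v) - M n (L m v) = sm (complex_of_real n) (M (n + m) v)) \<and>
     (\<forall>p p'. hO p \<longrightarrow> hO p' \<longrightarrow> (\<forall>v.
        Y p (Y p' v) - Y p' (Y p v) = sm (complex_of_real (p' - p)) (M (p + p') v))) \<and>
     (\<forall>p n. hO p \<longrightarrow> n \<in> \<int> \<longrightarrow> (\<forall>v. Y p (M n v) - M n (Y p v) = 0)) \<and>
     (\<forall>n\<in>\<int>. \<forall>n'\<in>\<int>. \<forall>v. M n (M n' v) - M n' (M n v) = 0) \<and>
     (\<forall>m\<in>\<int>. \<forall>v. L m (C v) - C (L m v) = 0) \<and>
     (\<forall>p. hO p \<longrightarrow> (\<forall>v. Y p (C v) - C (Y p v) = 0)) \<and>
     (\<forall>n\<in>\<int>. \<forall>v. M n (C v) - C (M n v) = 0)"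

definition is_basis_hZ :: "(complex \<Rightarrow> 'v::ab_group_add \<Rightarrow> 'v) \<Rightarrow> (real \<Rightarrow> 'v) \<Rightarrow> bool" where
  "is_basis_hZ sm x \<longleftrightarrow> inj_on x {k. hZ k} \<and>
     \<not> module.dependent sm (x ` {k. hZ k}) \<and> module.span sm (x ` {k. hZ k}) = UNIV"

end

theory Submission
  imports Defs
begin

text \<open>
  Write p = i + 1/2 and k = j + 1/2 with i, j integers and put F i j = f p k.  Applying the
  bracket relation [L_m, Y_p] = (p - m/2) Y_(p+m) to the basis vector x_k and comparing the
  coefficients of x_(k+p+m) gives, for all integers i, j, m, the relation

    F i j (a + i + j + 1 + b m) - (a + j + 1/2 + (b + 1/2) m) F i (j+m) = (i + 1/2 - m/2) F (i+m) j.

  The first half of the file shows that every F satisfying these relations is constant: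
  the case i = 0, m = 1 says (a + b + j + 1) (F 0 (j+1) - F 0 j) = 0, so the row F 0 is
  constant across every step j to j+1 except possibly the single step where a + b + j + 1 = 0;
  at that step two further relations give (1 - 4b) d = 0 and (1 - 10b) d = 0 for the jump d,
  hence d = 0.  The case i = 0 then expresses every other row through the constant row 0.
  The second half derives the relations from the module structure, and the theorem follows.
\<close>

definition LY_relations :: "complex \<Rightarrow> complex \<Rightarrow> (int \<Rightarrow> int \<Rightarrow> complex) \<Rightarrow> bool" where
  "LY_relations a b F \<longleftrightarrow> (\<forall>i j m. F i j * (a + of_int (i+j+1) + b*of_int m)
      - (a + of_int j + 1/2 + (b+1/2)*of_int m) * F i (j+m)
      = (of_int i + 1/2 - of_int m/2) * F (i+m) j)"

lemma LY_relationsD: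
  assumes "LY_relations a b F"
  shows "F i j * (a + of_int (i+j+1) + b*of_int m)
      - (a + of_int j + 1/2 + (b+1/2)*of_int m) * F i (j+m)
      = (of_int i + 1/2 - of_int m/2) * F (i+m) j"
  using assms unfolding LY_relations_def by blast

lemma row0_step_regular:
  assumes E: "LY_relations a b F" and "a + b + of_int j + 1 \<noteq> 0"
  shows "F 0 (j+1) = F 0 j"
proof -
  have "(a + b + of_int j + 1) * (F 0 (j+1) - F 0 j) = 0"
    using LY_relationsD[OF E, of 0 j 1] by (simp add: algebra_simps)
  with assms(2) show ?thesis by simp
qed

text \<open>At the exceptional step (a + b + j + 1 = 0) row 0 is still constant: with lo and hi the
  values of row 0 just left and right of the step, the relations (i, j, m) = (-1, j+2, -2) and
  (-1, j+2, -3), whose terms off row 0 are computed from the case i = 0, give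
  (1 - 4b)(hi - lo) = 0 and (1 - 10b)(hi - lo) = 0.\<close>

lemma row0_step_singular:
  assumes E: "LY_relations a b F" and sing: "a + b + of_int j + 1 = 0"
  shows "F 0 (j+1) = F 0 j"
proof -
  define lo hi where "lo = F 0 j" and "hi = F 0 (j+1)"
  have a_eq: "a = - b - of_int j - 1" using sing by (simp add: algebra_simps eq_neg_iff_add_eq_0)
  have lo1: "F 0 (j-1) = lo" using row0_step_regular[OF E, of "j-1"] by (simp add: a_eq lo_def)
  have lo2: "F 0 (j-2) = lo" using row0_step_regular[OF E, of "j-2"] lo1 by (simp add: a_eq algebra_simps)
  have hi2: "F 0 (j+2) = hi" using row0_step_regular[OF E, of "j+1"] by (simp add: a_eq hi_def algebra_simps)
  note e = LY_relationsD[OF E]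
  have m1_lo: "F (-1) j = lo" using e[of 0 j "-1"] lo1 by (simp add: a_eq lo_def algebra_simps)
  have m1_lo1: "F (-1) (j-1) = lo" using e[of 0 "j-1" "-1"] lo1 lo2 by (simp add: a_eq algebra_simps)
  have m1_hi: "F (-1) (j+2) = hi" using e[of 0 "j+2" "-1"] hi2 by (simp add: a_eq hi_def algebra_simps)
  have m3: "2 * F (-3) (j+2) = (2 - 4*b) * hi + 4*b * lo"
    using e[of 0 "j+2" "-3"] hi2 lo1 by (simp add: a_eq algebra_simps)
  have m4: "5 * F (-4) (j+2) = (4 - 10*b) * hi + (1 + 10*b) * lo"
    using e[of 0 "j+2" "-4"] hi2 lo2 by (simp add: a_eq algebra_simps)
  have "F (-3) (j+2) = 2 * (1 - 3*b) * hi - (1 - 6*b) * lo"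
    using e[of "-1" "j+2" "-2"] m1_hi m1_lo by (simp add: a_eq algebra_simps)
  with m3 have "2 * ((1 - 4*b) * (hi - lo)) = 0" by (simp add: algebra_simps)
  then have quarter: "(1 - 4*b) * (hi - lo) = 0" by simp
  have "F (-4) (j+2) = (1 - 4*b) * hi + 4*b * lo"
    using e[of "-1" "j+2" "-3"] m1_hi m1_lo1 by (simp add: a_eq algebra_simps)
  with m4 have tenth: "(1 - 10*b) * (hi - lo) = 0" by (simp add: algebra_simps)
  have "6 * (hi - lo) = 10 * ((1 - 4*b) * (hi - lo)) - 4 * ((1 - 10*b) * (hi - lo))"
    by (simp add: algebra_simps)
  then have "6 * (hi - lo) = 0" by (simp only: quarter tenth) simp
  then show ?thesis by (simp add: lo_def hi_def)
qed

lemma row0_step: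
  assumes "LY_relations a b F"
  shows "F 0 (j+1) = F 0 j"
  using row0_step_regular[OF assms] row0_step_singular[OF assms] by blast

lemma row0_const:
  assumes "LY_relations a b F"
  shows "F 0 j = F 0 0"
proof (induction j rule: int_induct[where k=0])
  case base then show ?case by simp
next
  case (step1 i) then show ?case using row0_step[OF assms, of i] by simp
next
  case (step2 i) then show ?case using row0_step[OF assms, of "i-1"] by simp
qed

text \<open>Every solution of the relations is constant: for i \<noteq> 1 the relation (0, j, i) expresses
  F i j through row 0, and the remaining row i = 1 is reached by (-1, j, 2).\<close>

lemma LY_relations_const:
  assumes E: "LY_relations a b F"
  shows "F i j = F 0 0"
proof -
  have off_one: "F n j = F 0 0" if "n \<noteq> 1" for n j
  proof -
    have "(1/2 - of_int n/2) * F n j = (1/2 - of_int n/2) * F 0 0"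
      using LY_relationsD[OF E, of 0 j n] row0_const[OF E, of j] row0_const[OF E, of "j+n"]
      by (simp add: algebra_simps)
    moreover have "(1/2 - of_int n/2 :: complex) \<noteq> 0"
      using that by (simp add: field_simps)
    ultimately show ?thesis by simp
  qed
  show ?thesis
  proof (cases "i = 1")
    case True
    have "(-1) * F 1 j = (-1) * F 0 0"
      using LY_relationsD[OF E, of "-1" j 2] off_one[of "-1" j] off_one[of "-1" "j+2"]
      by (simp add: algebra_simps)
    with True show ?thesis by simp
  next
    case False
    then show ?thesis by (rule off_one)
  qed
qed

lemma hO_imp_hZ:
  assumes "hO p" shows "hZ p"
proof -
  have "2 * (p - 1/2) + 1 \<in> \<int>" using assms unfolding hO_def by (intro Ints_add Ints_mult) auto
  then show ?thesis unfolding hZ_def by (simp add: algebra_simps)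
qed

lemma Ints_imp_hZ: "n \<in> \<int> \<Longrightarrow> hZ n"
  unfolding hZ_def by simp

lemma hO_add_hO:
  assumes "hO p" "hO q" shows "p + q \<in> \<int>"
proof -
  have "(p - 1/2) + (q - 1/2) + 1 \<in> \<int>" using assms unfolding hO_def by (intro Ints_add) auto
  then show ?thesis by simp
qed

lemma hO_add_Ints:
  assumes "hO p" "n \<in> \<int>" shows "hO (p + n)"
proof -
  have "(p - 1/2) + n \<in> \<int>" using assms unfolding hO_def by (intro Ints_add)
  then show ?thesis unfolding hO_def by (simp add: algebra_simps)
qed

lemma hO_of_int: "hO (of_int i + 1/2)"
  unfolding hO_def by simp

lemma hO_cases:
  assumes "hO p"
  obtains i :: int where "p = of_int i + 1/2"
proof -
  from assms obtain i where "p - 1/2 = of_int i" unfolding hO_def by (auto elim: Ints_cases)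
  then have "p = of_int i + 1/2" by (simp add: algebra_simps)
  then show thesis by (rule that)
qed

lemma Lhalf_moduleD:
  assumes "Lhalf_module sm L Y M C"
  shows "module sm"
    and "m \<in> \<int> \<Longrightarrow> module_hom sm sm (L m)"
    and "hO p \<Longrightarrow> module_hom sm sm (Y p)"
    and "m \<in> \<int> \<Longrightarrow> hO p \<Longrightarrow>
           L m (Y p v) - Y p (L m v) = sm (complex_of_real (p - m / 2)) (Y (p + m) v)"
  using assms unfolding Lhalf_module_def by auto

lemma independent_scale_eq:
  assumes "module sm" "\<not> module.dependent sm S" "w \<in> S" "sm c w = sm d w"
  shows "c = d"
proof (rule ccontr)
  assume "c \<noteq> d"
  have "sm (c - d) w = 0"
    using assms(4) by (simp add: module.scale_left_diff_distrib[OF assms(1)])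
  then have "module.dependent sm S"
    unfolding module.dependent_explicit[OF assms(1)]
    using assms(3) \<open>c \<noteq> d\<close> by (intro exI[of _ "{w}"] exI[of _ "\<lambda>_. c - d"]) auto
  with assms(2) show False by simp
qed

text \<open>The bracket [L_m, Y_p] applied to x_k, with k in 1/2 + Z: both sides are multiples of the basis
  vector x_(k+p+m), and comparing coefficients gives the relation in real indices.\<close>

lemma LY_commutator_on_basis:
  fixes sm :: "complex \<Rightarrow> 'v::ab_group_add \<Rightarrow> 'v"
  assumes LM: "Lhalf_module sm L Y M C"
    and basis: "is_basis_hZ sm x"
    and Y_act: "\<forall>p k. hO p \<longrightarrow> hZ k \<longrightarrow> Y p (x k) = sm (f p k) (x (k + p))"
    and L_int: "\<forall>n k. n \<in> \<int> \<longrightarrow> k \<in> \<int> \<longrightarrow>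
           L n (x k) = sm (a + complex_of_real k + b * complex_of_real n) (x (k + n))"
    and L_half: "\<forall>n k. n \<in> \<int> \<longrightarrow> hO k \<longrightarrow>
           L n (x k) = sm (a + complex_of_real k + (b + 1/2) * complex_of_real n) (x (k + n))"
    and p: "hO p" and k: "hO k" and m: "m \<in> \<int>"
  shows "f p k * (a + complex_of_real (k + p) + b * complex_of_real m)
         - (a + complex_of_real k + (b + 1/2) * complex_of_real m) * f p (k + m)
       = complex_of_real (p - m/2) * f (p + m) k"
proof -
  have mod: "module sm" using Lhalf_moduleD(1)[OF LM] .
  interpret Lm: module_hom sm sm "L m" using Lhalf_moduleD(2)[OF LM m] .
  interpret Yp: module_hom sm sm "Y p" using Lhalf_moduleD(3)[OF LM p] .
  define w where "w = x (k + p + m)"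
  have w_basis: "w \<in> x ` {k. hZ k}"
    unfolding w_def using hO_add_hO[OF k p] m by (blast intro: Ints_imp_hZ Ints_add)
  have LY: "L m (Y p (x k)) = sm (f p k * (a + complex_of_real (k + p) + b * complex_of_real m)) w"
    using Y_act L_int p k m hO_imp_hZ hO_add_hO[OF k p]
    by (simp add: w_def Lm.scale)
  have YL: "Y p (L m (x k)) = sm ((a + complex_of_real k + (b + 1/2) * complex_of_real m) * f p (k + m)) w"
    using Y_act L_half p k m hO_imp_hZ hO_add_Ints[OF k m]
    by (simp add: w_def Yp.scale ac_simps)
  have Ypm: "sm (complex_of_real (p - m/2)) (Y (p + m) (x k)) = sm (complex_of_real (p - m/2) * f (p + m) k) w"
    using Y_act hO_add_Ints[OF p m] k hO_imp_hZ
    by (simp add: w_def ac_simps)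
  have "sm (f p k * (a + complex_of_real (k + p) + b * complex_of_real m)
         - (a + complex_of_real k + (b + 1/2) * complex_of_real m) * f p (k + m)) w
       = sm (complex_of_real (p - m/2) * f (p + m) k) w"
    using Lhalf_moduleD(4)[OF LM m p, of "x k"] LY YL Ypm
    by (simp add: module.scale_left_diff_distrib[OF mod])
  then show ?thesis
    using independent_scale_eq[OF mod _ w_basis] basis unfolding is_basis_hZ_def by blast
qed

lemma LY_relations_of_module:
  fixes sm :: "complex \<Rightarrow> 'v::ab_group_add \<Rightarrow> 'v"
  assumes LM: "Lhalf_module sm L Y M C"
    and basis: "is_basis_hZ sm x"
    and Y_act: "\<forall>p k. hO p \<longrightarrow> hZ k \<longrightarrow> Y p (x k) = sm (f p k) (x (k + p))"
    and L_int: "\<forall>n k. n \<in> \<int> \<longrightarrow> k \<in> \<int> \<longrightarrow>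
           L n (x k) = sm (a + complex_of_real k + b * complex_of_real n) (x (k + n))"
    and L_half: "\<forall>n k. n \<in> \<int> \<longrightarrow> hO k \<longrightarrow>
           L n (x k) = sm (a + complex_of_real k + (b + 1/2) * complex_of_real n) (x (k + n))"
  shows "LY_relations a b (\<lambda>i j. f (of_int i + 1/2) (of_int j + 1/2))"
  unfolding LY_relations_def
proof (intro allI)
  fix i j m :: int
  have "f (of_int i + 1/2) (of_int j + 1/2) *
          (a + complex_of_real (of_int j + 1/2 + (of_int i + 1/2)) + b * complex_of_real (of_int m))
        - (a + complex_of_real (of_int j + 1/2) + (b + 1/2) * complex_of_real (of_int m)) *
          f (of_int i + 1/2) (of_int j + 1/2 + of_int m)
      = complex_of_real (of_int i + 1/2 - of_int m / 2) * f (of_int i + 1/2 + of_int m) (of_int j + 1/2)"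
    by (rule LY_commutator_on_basis[OF LM basis Y_act L_int L_half hO_of_int hO_of_int]) simp
  then show "f (of_int i + 1/2) (of_int j + 1/2) * (a + of_int (i+j+1) + b * of_int m)
      - (a + of_int j + 1/2 + (b+1/2) * of_int m) * f (of_int i + 1/2) (of_int (j+m) + 1/2)
      = (of_int i + 1/2 - of_int m/2) * f (of_int (i+m) + 1/2) (of_int j + 1/2)"
    by (simp add: ac_simps)
qed

text \<open>The theorem: f restricted to (1/2 + Z) \<times> (1/2 + Z) is the constant F 0 0.\<close>

theorem lemma3p4:
  fixes sm :: "complex \<Rightarrow> 'v::ab_group_add \<Rightarrow> 'v"
    and L Y M :: "real \<Rightarrow> 'v \<Rightarrow> 'v" and C :: "'v \<Rightarrow> 'v"
    and x :: "real \<Rightarrow> 'v"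
    and a b :: complex and f g :: "real \<Rightarrow> real \<Rightarrow> complex"
  assumes "Lhalf_module sm L Y M C"
    and "\<forall>v. C v = 0"
    and "is_basis_hZ sm x"
    and "\<forall>p k. hO p \<longrightarrow> hZ k \<longrightarrow> Y p (x k) = sm (f p k) (x (k + p))"
    and "\<forall>n k. n \<in> \<int> \<longrightarrow> hZ k \<longrightarrow> M n (x k) = sm (g n k) (x (k + n))"
    and "\<forall>n k. n \<in> \<int> \<longrightarrow> k \<in> \<int> \<longrightarrow>
           L n (x k) = sm (a + complex_of_real k + b * complex_of_real n) (x (k + n))"
    and "\<forall>n k. n \<in> \<int> \<longrightarrow> hO k \<longrightarrow>
           L n (x k) = sm (a + complex_of_real k + (b + 1/2) * complex_of_real n) (x (k + n))"
  shows "\<exists>d0. \<forall>p k. hO p \<longrightarrow> hO k \<longrightarrow> f p k = d0"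
proof -
  define F where "F i j = f (of_int i + 1/2) (of_int j + 1/2)" for i j :: int
  have E: "LY_relations a b F"
    unfolding F_def using LY_relations_of_module assms(1,3,4,6,7) .
  have const: "f p k = F 0 0" if "hO p" "hO k" for p k
  proof -
    obtain i where "p = of_int i + 1/2" using \<open>hO p\<close> by (rule hO_cases)
    moreover obtain j where "k = of_int j + 1/2" using \<open>hO k\<close> by (rule hO_cases)
    ultimately show ?thesis using LY_relations_const[OF E, of i j] by (simp add: F_def)
  qed
  show ?thesis
    using const by (intro exI[of _ "F 0 0"] allI impI)
qed

end
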